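(* For every $n\ge 4$, if $G\sim G(n,1/2)$ then $\mathbb{P}(G\text{ is not even-degenerate})\ge (1/2)^{2n-3}$.
   Context: $G(n,1/2)$ is the uniformly random graph on $n$ labelled vertices. A graph $G$ on $n$ vertices is even-degenerate if there is an ordering $v_1,\dots,v_n$ of its vertices such that for each $1\le i\le n-2$, $v_i$ has an even number of neighbours in $\{v_{i+1},\dots,v_n\}$. *)

theory Defs
  imports "HOL-Probability.Probability"
begin

text \<open>Simple graphs on the labelled vertex set {0..<n}, represented by their edge sets
  (sets of 2-element subsets of {0..<n}).\<close>

definition all_edges :: "nat \<Rightarrow> nat set set" where
  "all_edges n = {{u, v} | u v. u < n \<and> v < n \<and> u \<noteq> v}"

definition Gnp_half :: "nat \<Rightarrow> nat set set pmf" where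
  "Gnp_half n = pmf_of_set (Pow (all_edges n))"

text \<open>Even-degenerate: there is an ordering v_0,...,v_(n-1) of the vertices such that for
  each position i (0-indexed) with i \<le> n-3 (i.e. 1-indexed 1 \<le> i \<le> n-2), v_i has an even
  number of neighbours among the later vertices.\<close>

definition even_degenerate :: "nat \<Rightarrow> nat set set \<Rightarrow> bool" where
  "even_degenerate n G \<longleftrightarrow>
     (\<exists>vs. distinct vs \<and> set vs = {0..<n} \<and>
        (\<forall>i. i + 2 < n \<longrightarrow>
           even (card {j. i < j \<and> j < n \<and> {vs ! i, vs ! j} \<in> G})))"

end

theory Submission
  imports Defs
begin

text \<open>Choose \<open>a \<in> {0, 1}\<close> so that \<open>V = {a<..<n}\<close> has odd size. For any graph \<open>H\<close> on \<open>V\<close>,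
  join \<open>a\<close> to every vertex of even degree in \<open>H\<close>. By the handshake lemma \<open>a\<close> is joined to an
  odd number of vertices, so all vertices of \<open>insert a V\<close> get odd degree, and the only other
  possible vertex, \<open>0\<close>, is isolated. In any ordering, the first vertex, or the second one if
  the first is isolated, then has an odd number of later neighbours. These \<open>2 ^ (card V choose 2)\<close>
  graphs are distinct, and \<open>(n choose 2) - (card V choose 2) \<le> 2 * n - 3\<close>.\<close>

definition deg :: "'a set set \<Rightarrow> 'a \<Rightarrow> nat" where
  "deg G v = card {u. {v, u} \<in> G}"

definition edges_on :: "'a set \<Rightarrow> 'a set set" where
  "edges_on V = {e. e \<subseteq> V \<and> card e = 2}"

lemma all_edges_eq_edges_on: "all_edges n = edges_on {0..<n}"
  unfolding all_edges_def edges_on_def by (fastforce simp: card_2_iff)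

lemma edges_on_mono: "V \<subseteq> W \<Longrightarrow> edges_on V \<subseteq> edges_on W"
  unfolding edges_on_def by blast

lemma finite_edges_on: "finite V \<Longrightarrow> finite (edges_on V)"
  unfolding edges_on_def by (rule finite_subset[of _ "Pow V"]) auto

lemma card_edges_on: "finite V \<Longrightarrow> card (edges_on V) = card V choose 2"
  unfolding edges_on_def by (rule n_subsets)

lemma edges_onD:
  assumes "G \<subseteq> edges_on V" "{v, u} \<in> G"
  shows "v \<in> V" "u \<in> V"
  using assms unfolding edges_on_def by auto

lemma finite_neighbours: "finite V \<Longrightarrow> G \<subseteq> edges_on V \<Longrightarrow> finite {u. {v, u} \<in> G}"
  by (rule finite_subset[of _ V]) (auto dest: edges_onD)

lemma deg_insert_edge:
  assumes "finite {u. {v, u} \<in> H}" "{x, y} \<notin> H" "x \<noteq> y"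
  shows "deg (insert {x, y} H) v = deg H v + (if v \<in> {x, y} then 1 else 0)"
proof -
  have "{u. {v, u} \<in> insert {x, y} H} = {u. {v, u} \<in> H} \<union> {u. {v, u} = {x, y}}"
    by auto
  moreover have "{u. {v, u} = {x, y}} = (if v = x then {y} else if v = y then {x} else {})"
    using assms(3) by (auto simp: doubleton_eq_iff)
  moreover have "{u. {v, u} \<in> H} \<inter> {u. {v, u} = {x, y}} = {}"
    using assms(2) by auto
  ultimately show ?thesis
    unfolding deg_def using assms(1,3) by (simp add: card_Un_disjoint)
qed

lemma sum_deg_edges_on:
  assumes "finite V" "H \<subseteq> edges_on V"
  shows "(\<Sum>v\<in>V. deg H v) = 2 * card H"
proof -
  have "finite H"
    using assms finite_edges_on finite_subset by blast
  then show ?thesis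
    using assms(2)
  proof (induction H rule: finite_subset_induct')
    case empty
    then show ?case by (simp add: deg_def)
  next
    case (insert e H)
    obtain x y where e: "e = {x, y}" "x \<noteq> y" and xy: "x \<in> V" "y \<in> V"
      using insert.hyps(2) by (auto simp: edges_on_def card_2_iff)
    have "(\<Sum>v\<in>V. deg (insert e H) v) = (\<Sum>v\<in>V. deg H v) + card (V \<inter> {x, y})"
      using insert.hyps(3,4) assms(1) finite_neighbours[OF assms(1) insert.hyps(3)]
      by (simp add: e deg_insert_edge sum.distrib sum.If_cases Int_def)
    also have "card (V \<inter> {x, y}) = 2"
      using xy e(2) by (simp add: Int_absorb1)
    finally show ?case
      using insert by simp
  qed
qed

lemma card_later_neighbours_eq_deg:
  assumes "distinct vs" "set vs = {0..<n}" "G \<subseteq> all_edges n"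
    and no_earlier: "\<forall>k<i. {vs ! i, vs ! k} \<notin> G"
  shows "card {j. i < j \<and> j < n \<and> {vs ! i, vs ! j} \<in> G} = deg G (vs ! i)"
proof -
  have len: "length vs = n"
    using distinct_card[OF assms(1)] assms(2) by simp
  have "{u. {vs ! i, u} \<in> G} = (!) vs ` {j. i < j \<and> j < n \<and> {vs ! i, vs ! j} \<in> G}"
  proof (intro equalityI subsetI)
    fix u
    assume "u \<in> {u. {vs ! i, u} \<in> G}"
    then have edge: "{vs ! i, u} \<in> G" by simp
    then have "u < n" "u \<noteq> vs ! i"
      using assms(3) by (auto simp: all_edges_def doubleton_eq_iff)
    then obtain j where "j < n" "vs ! j = u" "j \<noteq> i"
      using assms(2) len by (metis atLeastLessThan_iff in_set_conv_nth zero_le)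
    moreover have "\<not> j < i"
      using no_earlier edge \<open>vs ! j = u\<close> by auto
    ultimately show "u \<in> (!) vs ` {j. i < j \<and> j < n \<and> {vs ! i, vs ! j} \<in> G}"
      using edge by force
  qed auto
  moreover have "inj_on ((!) vs) {j. i < j \<and> j < n \<and> {vs ! i, vs ! j} \<in> G}"
    using inj_on_nth[OF assms(1)] len by auto
  ultimately show ?thesis
    unfolding deg_def by (simp add: card_image)
qed

lemma not_even_degenerate_if_odd_degrees:
  assumes "4 \<le> n" "G \<subseteq> all_edges n"
    and odd_or_isolated: "\<forall>v<n. odd (deg G v) \<or> deg G v = 0"
    and one_isolated: "\<forall>u<n. \<forall>v<n. deg G u = 0 \<longrightarrow> deg G v = 0 \<longrightarrow> u = v"
  shows "\<not> even_degenerate n G"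
proof
  assume "even_degenerate n G"
  then obtain vs where vs: "distinct vs" "set vs = {0..<n}"
    and ev: "\<forall>i. i + 2 < n \<longrightarrow> even (card {j. i < j \<and> j < n \<and> {vs ! i, vs ! j} \<in> G})"
    unfolding even_degenerate_def by blast
  have len: "length vs = n"
    using distinct_card[OF vs(1)] vs(2) by simp
  have vs_lt: "vs ! k < n" if "k < n" for k
    using vs(2) len nth_mem that by fastforce
  have fin: "finite {u. {v, u} \<in> G}" for v
    using finite_neighbours[of "{0..<n}"] assms(2) by (simp add: all_edges_eq_edges_on)
  have "even (deg G (vs ! 0))"
    using ev[rule_format, of 0] card_later_neighbours_eq_deg[OF vs assms(2), of 0] assms(1)
    by simp
  then have "deg G (vs ! 0) = 0"
    using odd_or_isolated vs_lt assms(1) by simp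
  then have "{vs ! 0, vs ! 1} \<notin> G"
    using fin[of "vs ! 0"] by (auto simp: deg_def)
  then have "{vs ! 1, vs ! 0} \<notin> G"
    by (simp add: insert_commute)
  then have "even (deg G (vs ! 1))"
    using ev[rule_format, of 1] card_later_neighbours_eq_deg[OF vs assms(2), of 1] assms(1)
    by simp
  moreover have "vs ! 1 \<noteq> vs ! 0"
    using vs(1) len assms(1) by (simp add: nth_eq_iff_index_eq)
  moreover have "vs ! 0 < n" "vs ! 1 < n"
    using vs_lt assms(1) by simp_all
  ultimately show False
    using odd_or_isolated one_isolated \<open>deg G (vs ! 0) = 0\<close> by (metis odd_pos)
qed

definition parity_completion :: "'a \<Rightarrow> 'a set \<Rightarrow> 'a set set \<Rightarrow> 'a set set" where
  "parity_completion a V H = H \<union> {{a, v} | v. v \<in> V \<and> even (deg H v)}"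

lemma parity_completion_subset_edges_on:
  assumes "a \<notin> V" "H \<subseteq> edges_on V"
  shows "parity_completion a V H \<subseteq> edges_on (insert a V)"
  using assms edges_on_mono[of V "insert a V"]
  unfolding parity_completion_def by (auto simp: edges_on_def card_insert_if)

lemma parity_completion_Int_Pow:
  assumes "a \<notin> V" "H \<subseteq> edges_on V"
  shows "parity_completion a V H \<inter> Pow V = H"
  using assms unfolding parity_completion_def edges_on_def by auto

lemma inj_on_parity_completion:
  "a \<notin> V \<Longrightarrow> inj_on (parity_completion a V) (Pow (edges_on V))"
  by (rule inj_on_inverseI[where g = "\<lambda>G. G \<inter> Pow V"]) (simp add: parity_completion_Int_Pow)

lemma deg_parity_completion_outside:
  assumes "v \<notin> insert a V" "H \<subseteq> edges_on V"
  shows "deg (parity_completion a V H) v = 0"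
proof -
  have "{u. {v, u} \<in> parity_completion a V H} = {}"
    using assms edges_onD(1)[OF assms(2)]
    by (auto simp: parity_completion_def doubleton_eq_iff)
  then show ?thesis by (simp add: deg_def)
qed

lemma neighbours_parity_completion:
  assumes "a \<notin> V" "v \<in> V"
  shows "{u. {v, u} \<in> parity_completion a V H} = {u. {v, u} \<in> H} \<union> {u. u = a \<and> even (deg H v)}"
  using assms unfolding parity_completion_def by (auto simp: doubleton_eq_iff)

lemma odd_deg_parity_completion:
  assumes "finite V" "a \<notin> V" "H \<subseteq> edges_on V" "v \<in> V"
  shows "odd (deg (parity_completion a V H) v)"
proof (cases "even (deg H v)")
  case True
  then have "{u. {v, u} \<in> parity_completion a V H} = insert a {u. {v, u} \<in> H}"
    unfolding neighbours_parity_completion[OF assms(2,4)] by auto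
  moreover have "a \<notin> {u. {v, u} \<in> H}"
    using edges_onD(2)[OF assms(3), of v a] assms(2) by auto
  ultimately have "deg (parity_completion a V H) v = Suc (deg H v)"
    using finite_neighbours[OF assms(1,3)] unfolding deg_def by simp
  then show ?thesis
    using True by simp
next
  case False
  then have "{u. {v, u} \<in> parity_completion a V H} = {u. {v, u} \<in> H}"
    unfolding neighbours_parity_completion[OF assms(2,4)] by auto
  then show ?thesis
    using False unfolding deg_def by simp
qed

lemma card_filter_add_card_filter_not:
  "finite A \<Longrightarrow> card {x \<in> A. P x} + card {x \<in> A. \<not> P x} = card A"
  by (subst card_Un_disjoint[symmetric]) (auto intro: arg_cong[where f = card])

lemma odd_deg_parity_completion_apex:
  assumes "finite V" "a \<notin> V" "H \<subseteq> edges_on V" "odd (card V)"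
  shows "odd (deg (parity_completion a V H) a)"
proof -
  have "{a, u} \<notin> H" for u
    using edges_onD(1)[OF assms(3)] assms(2) by blast
  then have nbrs: "{u. {a, u} \<in> parity_completion a V H} = {v \<in> V. even (deg H v)}"
    using assms(2) unfolding parity_completion_def by (auto simp: doubleton_eq_iff)
  have "even (card {v \<in> V. odd (deg H v)})"
    using sum_deg_edges_on[OF assms(1,3)] even_sum_iff[OF assms(1), of "deg H"] by simp
  then have "odd (card {v \<in> V. even (deg H v)})"
    using card_filter_add_card_filter_not[OF assms(1), of "\<lambda>v. even (deg H v)"] assms(4)
    by (metis odd_add)
  then show ?thesis
    unfolding deg_def nbrs .
qed

lemma parity_completion_subset_all_edges:
  assumes "a < n" "H \<subseteq> edges_on {a<..<n}"
  shows "parity_completion a {a<..<n} H \<subseteq> all_edges n"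
proof -
  have "parity_completion a {a<..<n} H \<subseteq> edges_on (insert a {a<..<n})"
    using assms(2) by (intro parity_completion_subset_edges_on) auto
  also have "\<dots> \<subseteq> all_edges n"
    unfolding all_edges_eq_edges_on using assms(1) by (intro edges_on_mono) auto
  finally show ?thesis .
qed

lemma not_even_degenerate_parity_completion:
  assumes "4 \<le> n" "a \<le> 1" "odd (n - a - 1)" "H \<subseteq> edges_on {a<..<n}"
  shows "\<not> even_degenerate n (parity_completion a {a<..<n} H)"
proof (rule not_even_degenerate_if_odd_degrees)
  let ?G = "parity_completion a {a<..<n} H"
  show "?G \<subseteq> all_edges n"
    using assms by (intro parity_completion_subset_all_edges) auto
  have odd_deg: "odd (deg ?G v)" if "a \<le> v" "v < n" for v
  proof (cases "v = a")
    case True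
    show ?thesis
      unfolding True using assms(3,4) by (intro odd_deg_parity_completion_apex) auto
  next
    case False
    then show ?thesis
      using assms(4) that by (intro odd_deg_parity_completion) auto
  qed
  have isolated: "deg ?G v = 0" if "v < a" for v
    using that assms(4) by (intro deg_parity_completion_outside) auto
  show "\<forall>v<n. odd (deg ?G v) \<or> deg ?G v = 0"
    using odd_deg isolated by (meson not_le)
  have "v = 0" if "v < n" "deg ?G v = 0" for v
    using odd_deg[of v] that assms(2) by fastforce
  then show "\<forall>u<n. \<forall>v<n. deg ?G u = 0 \<longrightarrow> deg ?G v = 0 \<longrightarrow> u = v"
    by blast
qed (use assms(1) in simp)

lemma prob_Gnp_half:
  "measure_pmf.prob (Gnp_half n) A = card (Pow (all_edges n) \<inter> A) / 2 ^ (n choose 2)"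
proof -
  have "finite (all_edges n)" "card (all_edges n) = n choose 2"
    by (simp_all add: all_edges_eq_edges_on finite_edges_on card_edges_on)
  then show ?thesis
    unfolding Gnp_half_def by (subst measure_pmf_of_set) (auto simp: card_Pow)
qed

lemma choose_two_le:
  assumes "2 \<le> n" "n - 2 \<le> m"
  shows "n choose 2 \<le> (m choose 2) + (2 * n - 3)"
proof -
  obtain k where k: "n = Suc (Suc k)"
    using assms(1) by (metis add_2_eq_Suc le_Suc_ex)
  have "Suc (Suc k) choose 2 = Suc k + (Suc k choose 2)" "Suc k choose 2 = k + (k choose 2)"
    by (simp_all add: numeral_2_eq_2)
  then have "n choose 2 = ((n - 2) choose 2) + (2 * n - 3)"
    unfolding k by simp
  also have "\<dots> \<le> (m choose 2) + (2 * n - 3)"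
    using assms(2) by (simp add: binomial_right_mono)
  finally show ?thesis .
qed

theorem mainTheorem5:
  fixes n :: nat
  assumes "n \<ge> 4"
  shows "measure_pmf.prob (Gnp_half n) {G. \<not> even_degenerate n G} \<ge> (1/2) ^ (2 * n - 3)"
proof -
  define a where "a = n mod 2"
  define V where "V = {a<..<n}"
  define bad where "bad = Pow (all_edges n) \<inter> {G. \<not> even_degenerate n G}"
  define k where "k = card (edges_on V)"
  have a: "a \<le> 1" "odd (n - a - 1)"
    using assms unfolding a_def by (auto simp: odd_iff_mod_2_eq_one)
  have "parity_completion a V H \<in> bad" if "H \<subseteq> edges_on V" for H
    using not_even_degenerate_parity_completion[OF assms a, of H]
      parity_completion_subset_all_edges[of a n H] that a(1) assms
    unfolding V_def bad_def by simp
  then have "card (Pow (edges_on V)) \<le> card bad"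
    by (intro card_inj_on_le[OF inj_on_parity_completion[of a V]])
      (auto simp: V_def bad_def all_edges_eq_edges_on finite_edges_on)
  then have card_bad: "2 ^ k \<le> card bad"
    by (simp add: k_def V_def card_Pow finite_edges_on)
  have "n choose 2 \<le> k + (2 * n - 3)"
    using choose_two_le[of n "n - a - 1"] assms a(1)
    unfolding k_def V_def by (simp add: card_edges_on)
  have "(1/2::real) ^ (2 * n - 3) = 2 ^ k / 2 ^ (k + (2 * n - 3))"
    by (simp add: power_add power_one_over)
  also have "\<dots> \<le> 2 ^ k / 2 ^ (n choose 2)"
    using \<open>n choose 2 \<le> k + (2 * n - 3)\<close> by (intro divide_left_mono power_increasing) auto
  also have "\<dots> \<le> card bad / 2 ^ (n choose 2)"
    using card_bad by (intro divide_right_mono) (simp_all flip: of_nat_le_iff)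
  finally show ?thesis
    by (simp add: prob_Gnp_half bad_def)
qed

end
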